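(* Let $\mathbf{x}_k\in\mathbb{R}^d$, $\sigma_k>0$, $\epsilon>0$. Suppose the sampled estimates $\mathbf{g}_k,\mathbf{B}_k,\mathbf{T}_k$ at $\mathbf{x}_k$ satisfy the sampling condition with accuracy $\epsilon$ and constants $\kappa_g=\frac14,\kappa_b=\frac14,\kappa_t=\frac12$, and set $\epsilon_2:=\epsilon^{2/3}$. Let $\mathbf{s}_k$ satisfy the approximate minimization condition with constant $\theta>0$. Then $$\|\mathbf{s}_k\|\ge\kappa_{k,2}^{-1/2}\left(\chi_{f,2}(\mathbf{x}_k+\mathbf{s}_k)-\tfrac12\epsilon_2\right)^{1/2},\qquad\kappa_{k,2}=3\sigma_k+\frac{L_t}{2}+\theta+\frac14,$$ where the right-hand side is read as $0$ when $\chi_{f,2}(\mathbf{x}_k+\mathbf{s}_k)<\frac12\epsilon_2$.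
   Context: $f(\mathbf{x})=\frac1n\sum_{i=1}^n f_i(\mathbf{x})$, each $f_i\in C^3(\mathbb{R}^d,\mathbb{R})$ with $f_i,\nabla f_i,\nabla^2 f_i,\nabla^3 f_i$ Lipschitz with constants $L_f,L_g,L_b,L_t$ (Euclidean norm on vectors; on $p$-th order tensors $\|A\|_{[p]}=\max_{\|\mathbf{h}_1\|=\dots=\|\mathbf{h}_p\|=1}|A[\mathbf{h}_1,\dots,\mathbf{h}_p]|$). For a third-order tensor $T$: $T[\mathbf{s}]^2=(\sum_{j,k}T_{ijk}s_js_k)_i$, $T[\mathbf{s}]^3=\sum_{i,j,k}T_{ijk}s_is_js_k$. Sampled estimates: $\mathbf{g}_k=\frac{1}{|\mathcal{S}^g|}\sum_{i\in\mathcal{S}^g}\nabla f_i(\mathbf{x}_k)$, $\mathbf{B}_k=\frac{1}{|\mathcal{S}^b|}\sum_{i\in\mathcal{S}^b}\nabla^2 f_i(\mathbf{x}_k)$, $\mathbf{T}_k=\frac{1}{|\mathcal{S}^t|}\sum_{i\in\mathcal{S}^t}\nabla^3 f_i(\mathbf{x}_k)$ for index sets $\mathcal{S}^g,\mathcal{S}^b,\mathcal{S}^t\subseteq\{1,\dots,n\}$. Model: $\phi_k(\mathbf{s})=f(\mathbf{x}_k)+\mathbf{g}_k^\top\mathbf{s}+\frac12\mathbf{s}^\top\mathbf{B}_k\mathbf{s}+\frac16\mathbf{T}_k[\mathbf{s}]^3$, $m_k(\mathbf{s})=\phi_k(\mathbf{s})+\frac{\sigma_k}{4}\|\mathbf{s}\|^4$.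 Sampling condition (accuracy $\epsilon$, constants $\kappa_g,\kappa_b,\kappa_t$): $\|\mathbf{g}_k-\nabla f(\mathbf{x}_k)\|\le\kappa_g\epsilon$; $\|(\mathbf{B}_k-\nabla^2 f(\mathbf{x}_k))\mathbf{s}\|\le\kappa_b\epsilon^{2/3}\|\mathbf{s}\|$ and $\|\mathbf{T}_k[\mathbf{s}]^2-\nabla^3 f(\mathbf{x}_k)[\mathbf{s}]^2\|\le\kappa_t\epsilon^{1/3}\|\mathbf{s}\|^2$ for all $\mathbf{s}\in\mathbb{R}^d$. Approximate minimization condition (constants $\theta>0,\zeta>0$): $m_k(\mathbf{s}_k)<m_k(\mathbf{0})$ and $\chi_{m,i}(\mathbf{x}_k,\mathbf{s}_k)\le\theta\|\mathbf{s}_k\|^{4-i}$, $i=1,2,3$, with $\chi_{m,1}=\|\nabla m_k(\mathbf{s})\|$, $\chi_{m,2}=\max(0,-\lambda_{min}(\nabla^2 m_k(\mathbf{s})))$, $\chi_{m,3}=\max\{|\nabla^3 m_k(\mathbf{s})[\mathbf{y}]^3|:\|\mathbf{y}\|=1,|\mathbf{y}^\top\nabla^2 m_k(\mathbf{s})\mathbf{y}|\le\zeta\}$ (empty maximum $=0$). Criticality: $\chi_{f,2}(\mathbf{x})=\max(0,-\lambda_{min}(\nabla^2 f(\mathbf{x})))$. *)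

theory Defs
  imports "HOL-Analysis.Analysis"
begin

type_synonym 'd tensor3 = "real^'d^'d^'d"

definition t3_app1 :: "'d::finite tensor3 \<Rightarrow> real^'d \<Rightarrow> real^'d^'d" where
  "t3_app1 T s = (\<chi> i j. \<Sum>k\<in>UNIV. T$i$j$k * s$k)"

definition t3_app2 :: "'d::finite tensor3 \<Rightarrow> real^'d \<Rightarrow> real^'d" where
  "t3_app2 T s = (\<chi> i. \<Sum>j\<in>UNIV. \<Sum>k\<in>UNIV. T$i$j$k * s$j * s$k)"

definition t3_app3 :: "'d::finite tensor3 \<Rightarrow> real^'d \<Rightarrow> real" where
  "t3_app3 T s = (\<Sum>i\<in>UNIV. \<Sum>j\<in>UNIV. \<Sum>k\<in>UNIV. T$i$j$k * s$i * s$j * s$k)"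

definition tnorm2 :: "real^'d^'d \<Rightarrow> real" where
  "tnorm2 A = Sup {\<bar>\<Sum>i\<in>UNIV. \<Sum>j\<in>UNIV. A$i$j * h1$i * h2$j\<bar> | h1 h2.
                    norm h1 = 1 \<and> norm h2 = 1}"

definition tnorm3 :: "('d::finite) tensor3 \<Rightarrow> real" where
  "tnorm3 T = Sup {\<bar>\<Sum>i\<in>UNIV. \<Sum>j\<in>UNIV. \<Sum>k\<in>UNIV. T$i$j$k * h1$i * h2$j * h3$k\<bar> | h1 h2 h3.
                    norm h1 = 1 \<and> norm h2 = 1 \<and> norm h3 = 1}"

definition eigenvalues :: "real^'d^'d \<Rightarrow> real set" where
  "eigenvalues A = {c. \<exists>v. v \<noteq> 0 \<and> A *v v = c *\<^sub>R v}"

definition lambda_min :: "real^'d^'d \<Rightarrow> real" where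
  "lambda_min A = Min (eigenvalues A)"

definition chi2 :: "real^'d^'d \<Rightarrow> real" where
  "chi2 A = max 0 (- lambda_min A)"

definition outer :: "real^'d \<Rightarrow> real^'d \<Rightarrow> real^'d^'d" where
  "outer u v = (\<chi> i j. u$i * v$j)"

text \<open>Cubic-regularised quartic model m_k and its derivatives (B, T symmetric).\<close>
definition model :: "real \<Rightarrow> real^'d \<Rightarrow> real^'d^'d \<Rightarrow> 'd::finite tensor3 \<Rightarrow> real \<Rightarrow> real^'d \<Rightarrow> real" where
  "model f0 g B T \<sigma> s = f0 + g \<bullet> s + (1/2) * (s \<bullet> (B *v s)) + (1/6) * t3_app3 T s
                        + (\<sigma>/4) * norm s ^ 4"

definition model_grad :: "real^'d \<Rightarrow> real^'d^'d \<Rightarrow> 'd::finite tensor3 \<Rightarrow> real \<Rightarrow> real^'d \<Rightarrow> real^'d" where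
  "model_grad g B T \<sigma> s = g + B *v s + (1/2) *\<^sub>R t3_app2 T s + (\<sigma> * norm s ^ 2) *\<^sub>R s"

definition model_hess :: "real^'d^'d \<Rightarrow> 'd::finite tensor3 \<Rightarrow> real \<Rightarrow> real^'d \<Rightarrow> real^'d^'d" where
  "model_hess B T \<sigma> s = B + t3_app1 T s + \<sigma> *\<^sub>R ((norm s ^ 2) *\<^sub>R mat 1 + 2 *\<^sub>R outer s s)"

text \<open>nabla^3 m(s)[y]^3 = T[y]^3 + 6 sigma (s.y) ||y||^2\<close>
definition model_third3 :: "'d::finite tensor3 \<Rightarrow> real \<Rightarrow> real^'d \<Rightarrow> real^'d \<Rightarrow> real" where
  "model_third3 T \<sigma> s y = t3_app3 T y + 6 * \<sigma> * (s \<bullet> y) * norm y ^ 2"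

definition chi_m1 where "chi_m1 g B T \<sigma> s = norm (model_grad g B T \<sigma> s)"
definition chi_m2 where "chi_m2 B T \<sigma> s = chi2 (model_hess B T \<sigma> s)"
definition chi_m3 :: "real^'d^'d \<Rightarrow> 'd::finite tensor3 \<Rightarrow> real \<Rightarrow> real \<Rightarrow> real^'d \<Rightarrow> real" where
  "chi_m3 B T \<sigma> \<zeta> s =
     (let S = {\<bar>model_third3 T \<sigma> s y\<bar> | y. norm y = 1 \<and>
                  \<bar>y \<bullet> (model_hess B T \<sigma> s *v y)\<bar> \<le> \<zeta>}
      in if S = {} then 0 else Sup S)"

end

theory Submission
  imports Defs
begin

(* Fix a unit vector y. Along y, the Hessian of f at x_k + s_k is compared with the model
   Hessian nabla^2 m_k(s_k) = B_k + T_k[s_k] + sigma_k (|s_k|^2 I + 2 s_k s_k^T) in four steps: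
   a Taylor expansion of nabla^2 f along s_k costs L_t/2 |s_k|^2; replacing nabla^2 f(x_k) by B_k
   costs eps^(2/3)/4; replacing nabla^3 f(x_k)[s_k] by T_k[s_k] costs |s_k| eps^(1/3)/2, which is
   at most (eps^(2/3) + |s_k|^2)/4; and the curvature condition chi_m2 <= theta |s_k|^2 bounds the
   model Hessian from below, the regularisation term contributing at most 3 sigma_k |s_k|^2.
   Hence y^T nabla^2 f(x_k + s_k) y >= -(kappa |s_k|^2 + eps^(2/3)/2) for every unit y. Because
   Hessians are symmetric (Schwarz), lambda_min is the minimum of the Rayleigh quotient, so
   chi_f2(x_k + s_k) <= kappa |s_k|^2 + eps^(2/3)/2, which rearranges to the claim. *)

section \<open>Symmetric matrices and the smallest eigenvalue\<close>

lemma transpose_eq_self_iff: "transpose A = A \<longleftrightarrow> (\<forall>i j. A $ i $ j = A $ j $ i)"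
  by (auto simp: transpose_def vec_eq_iff)

lemma inner_matrix_vector_commute:
  fixes A :: "real^'n::finite^'n"
  assumes "transpose A = A"
  shows "w \<bullet> (A *v v) = v \<bullet> (A *v w)"
  by (metis assms dot_lmul_matrix inner_commute transpose_matrix_vector)

lemma linear_coeff_eq_0_if_quadratic_nonneg:
  fixes a b :: real
  assumes nonneg: "\<And>t. 0 \<le> 2 * t * a + t\<^sup>2 * b"
  shows "a = 0"
proof -
  have "0 \<le> b" using nonneg[of 1] nonneg[of "-1"] by simp
  then consider "b = 0" | "0 < b" by linarith
  then show ?thesis
  proof cases
    case 1
    then have "a * a \<le> 0" using nonneg[of "-a"] by simp
    then show ?thesis by (auto simp: mult_le_0_iff)
  next
    case 2
    then have "0 \<le> - a\<^sup>2 / b"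
      using nonneg[of "-a/b"] by (simp add: field_simps power2_eq_square)
    then show ?thesis using \<open>0 < b\<close> by (simp add: divide_le_0_iff)
  qed
qed

lemma eigenvector_of_min_quadratic_form:
  fixes A :: "real^'n::finite^'n"
  assumes sym: "transpose A = A"
    and min: "\<And>y. m * (norm y)\<^sup>2 \<le> y \<bullet> (A *v y)"
    and attained: "v \<bullet> (A *v v) = m * (norm v)\<^sup>2"
  shows "A *v v = m *\<^sub>R v"
proof -
  have "w \<bullet> (A *v v - m *\<^sub>R v) = 0" for w
  proof (rule linear_coeff_eq_0_if_quadratic_nonneg)
    fix t :: real
    have "m * (norm (v + t *\<^sub>R w))\<^sup>2 \<le> (v + t *\<^sub>R w) \<bullet> (A *v (v + t *\<^sub>R w))"
      by (rule min)
    moreover have "(v + t *\<^sub>R w) \<bullet> (A *v (v + t *\<^sub>R w))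
        = v \<bullet> (A *v v) + 2 * t * (w \<bullet> (A *v v)) + t\<^sup>2 * (w \<bullet> (A *v w))"
      using inner_matrix_vector_commute[OF sym, of v w]
      by (simp add: matrix_vector_right_distrib matrix_vector_mult_scaleR inner_add_left
          inner_add_right power2_eq_square algebra_simps)
    moreover have "(norm (v + t *\<^sub>R w))\<^sup>2 = (norm v)\<^sup>2 + 2 * t * (w \<bullet> v) + t\<^sup>2 * (norm w)\<^sup>2"
      unfolding power2_norm_eq_inner
      by (simp add: inner_add_left inner_add_right inner_commute[of v w] power2_eq_square
          algebra_simps)
    ultimately show "0 \<le> 2 * t * (w \<bullet> (A *v v - m *\<^sub>R v)) + t\<^sup>2 * (w \<bullet> (A *v w) - m * (norm w)\<^sup>2)"
      using attained by (simp add: inner_diff_right algebra_simps)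
  qed
  from this[of "A *v v - m *\<^sub>R v"] show ?thesis by simp
qed

lemma finite_eigenvalues_symmetric:
  fixes A :: "real^'n::finite^'n"
  assumes sym: "transpose A = A"
  shows "finite (eigenvalues A)"
proof -
  have "\<forall>c\<in>eigenvalues A. \<exists>v. v \<noteq> 0 \<and> A *v v = c *\<^sub>R v"
    unfolding eigenvalues_def by blast
  from bchoice[OF this] obtain ev
    where ev_nz: "\<And>c. c \<in> eigenvalues A \<Longrightarrow> ev c \<noteq> 0"
      and ev: "\<And>c. c \<in> eigenvalues A \<Longrightarrow> A *v ev c = c *\<^sub>R ev c"
    by blast
  have orth: "ev c \<bullet> ev c' = 0"
    if "c \<in> eigenvalues A" "c' \<in> eigenvalues A" "c \<noteq> c'" for c c'
proof -
    have "c * (ev c \<bullet> ev c') = ev c' \<bullet> (A *v ev c)"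
      using ev[OF that(1)] by (simp add: inner_commute)
    also have "\<dots> = c' * (ev c \<bullet> ev c')"
      using ev[OF that(2)] by (simp add: inner_matrix_vector_commute[OF sym, of "ev c'"])
    finally show ?thesis using that(3) by simp
  qed
  have "inj_on ev (eigenvalues A)"
  proof (rule inj_onI, rule ccontr)
    fix c c' assume c: "c \<in> eigenvalues A" "c' \<in> eigenvalues A" "ev c = ev c'" "c \<noteq> c'"
    then have "ev c \<bullet> ev c = 0" using orth[of c c'] by simp
    then show False using ev_nz[OF c(1)] by simp
  qed
  moreover have "independent (ev ` eigenvalues A)"
  proof (rule pairwise_orthogonal_independent)
    show "pairwise orthogonal (ev ` eigenvalues A)"
      unfolding pairwise_image by (auto simp: pairwise_def orthogonal_def orth)
    show "0 \<notin> ev ` eigenvalues A"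
      using ev_nz by auto
  qed
  then have "finite (ev ` eigenvalues A)"
    using independent_bound by blast
  ultimately show ?thesis
    using finite_imageD by blast
qed

lemma lambda_min_symmetric:
  fixes A :: "real^'n::finite^'n"
  assumes sym: "transpose A = A"
  shows "\<exists>v. norm v = 1 \<and> v \<bullet> (A *v v) = lambda_min A"
    and "lambda_min A * (norm y)\<^sup>2 \<le> y \<bullet> (A *v y)"
proof -
  let ?q = "\<lambda>y. y \<bullet> (A *v y)"
  have "continuous_on (sphere 0 1) ?q"
    by (intro continuous_intros)
  moreover have "sphere (0::real^'n) 1 \<noteq> {}"
    by simp
  ultimately obtain v where v: "v \<in> sphere 0 1" and v_min: "\<And>y. y \<in> sphere 0 1 \<Longrightarrow> ?q v \<le> ?q y"
    using continuous_attains_inf[OF compact_sphere] by blast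
  define m where "m = ?q v"
  have min: "m * (norm y)\<^sup>2 \<le> ?q y" for y
  proof (cases "y = 0")
    case False
    have "m \<le> ?q (y /\<^sub>R norm y)"
      unfolding m_def using False by (intro v_min) simp
    also have "\<dots> = ?q y / (norm y)\<^sup>2"
      by (simp add: matrix_vector_mult_scaleR power2_eq_square divide_inverse_commute)
    finally show ?thesis using False by (simp add: pos_le_divide_eq)
  qed simp
  have "A *v v = m *\<^sub>R v"
    using v by (intro eigenvector_of_min_quadratic_form[OF sym min]) (simp add: m_def)
  moreover have "v \<noteq> 0"
    using v by auto
  ultimately have m_eig: "m \<in> eigenvalues A"
    unfolding eigenvalues_def by (intro CollectI exI[of _ v] conjI)
  have m_le: "m \<le> c" if "c \<in> eigenvalues A" for c
proof -
    from that obtain u where u: "u \<noteq> 0" "A *v u = c *\<^sub>R u"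
      by (auto simp: eigenvalues_def)
    have "m * (norm u)\<^sup>2 \<le> c * (norm u)\<^sup>2"
      using min[of u] u(2) by (simp add: power2_norm_eq_inner)
    then show ?thesis using u(1) by simp
  qed
  have m: "lambda_min A = m"
    unfolding lambda_min_def by (rule Min_eqI[OF finite_eigenvalues_symmetric[OF sym] m_le m_eig])
  show "\<exists>v. norm v = 1 \<and> v \<bullet> (A *v v) = lambda_min A"
    using v by (auto simp: m m_def)
  show "lambda_min A * (norm y)\<^sup>2 \<le> y \<bullet> (A *v y)"
    using min by (simp add: m)
qed

lemma neg_chi2_le_quadratic_form:
  fixes A :: "real^'n::finite^'n"
  assumes "transpose A = A" "norm y = 1"
  shows "- chi2 A \<le> y \<bullet> (A *v y)"
  using lambda_min_symmetric(2)[OF assms(1), of y] assms(2) by (simp add: chi2_def)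

lemma chi2_le_of_quadratic_form_ge:
  fixes A :: "real^'n::finite^'n"
  assumes "transpose A = A" "0 \<le> c" "\<And>y. norm y = 1 \<Longrightarrow> - c \<le> y \<bullet> (A *v y)"
  shows "chi2 A \<le> c"
proof -
  obtain v where "norm v = 1" "v \<bullet> (A *v v) = lambda_min A"
    using lambda_min_symmetric(1)[OF assms(1)] by blast
  with assms(2) assms(3)[of v] show ?thesis by (simp add: chi2_def)
qed

section \<open>Symmetry of second and third derivatives\<close>

lemma has_real_derivative_along_line:
  fixes f :: "real^'n::finite \<Rightarrow> real"
  assumes grad: "\<And>y. (f has_derivative (\<lambda>h. G y \<bullet> h)) (at y)"
  shows "((\<lambda>a. f (p + a *\<^sub>R u)) has_real_derivative (G (p + a *\<^sub>R u) \<bullet> u)) (at a)"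
proof -
  have "((\<lambda>a. p + a *\<^sub>R u) has_derivative (\<lambda>h. h *\<^sub>R u)) (at a)"
    by (auto intro!: derivative_eq_intros)
  from has_derivative_compose[OF this grad]
  have "((\<lambda>a. f (p + a *\<^sub>R u)) has_derivative (\<lambda>h. h * (G (p + a *\<^sub>R u) \<bullet> u))) (at a)"
    by simp
  then show ?thesis
    by (simp add: has_field_derivative_def mult.commute[of _ "G (p + a *\<^sub>R u) \<bullet> u"])
qed

lemma second_difference_near_hessian:
  fixes f :: "real^'n::finite \<Rightarrow> real"
  assumes grad: "\<And>y. (f has_derivative (\<lambda>h. G y \<bullet> h)) (at y)"
    and near: "\<And>z. norm z < \<delta> \<Longrightarrow> norm (G (x + z) - G x - K *v z) \<le> e * norm z"
    and "0 \<le> e" "0 < t" "t * (norm u + norm v) < \<delta>"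
  shows "\<bar>f (x + t *\<^sub>R v + t *\<^sub>R u) - f (x + t *\<^sub>R u) - f (x + t *\<^sub>R v) + f x
           - t\<^sup>2 * ((K *v v) \<bullet> u)\<bar> \<le> 2 * e * t\<^sup>2 * (norm u + norm v)\<^sup>2"
proof -
  \<comment> \<open>By the mean value theorem the second difference is t times a difference of two
    first-order Taylor remainders of G at x, each of size at most e t (|u| + |v|) |u|.\<close>
  define \<psi> where "\<psi> a = f (x + t *\<^sub>R v + a *\<^sub>R u) - f (x + a *\<^sub>R u) - t * ((K *v v) \<bullet> u) * a" for a
  define \<psi>' where "\<psi>' a = G (x + t *\<^sub>R v + a *\<^sub>R u) \<bullet> u - G (x + a *\<^sub>R u) \<bullet> u - t * ((K *v v) \<bullet> u)"
    for a
  have "(\<psi> has_real_derivative \<psi>' a) (at a)" for a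
    unfolding \<psi>_def \<psi>'_def
    by (rule DERIV_diff[OF DERIV_diff DERIV_cmult_Id]) (rule has_real_derivative_along_line[OF grad])+
  then have "\<exists>a. 0 < a \<and> a < t \<and> \<psi> t - \<psi> 0 = (t - 0) * \<psi>' a"
    by (intro MVT2[OF \<open>0 < t\<close>])
  then obtain a where a: "0 < a" "a < t" and mvt: "\<psi> t - \<psi> 0 = t * \<psi>' a"
    by auto
  let ?r = "\<lambda>z. G (x + z) - G x - K *v z"
  define z1 where "z1 = t *\<^sub>R v + a *\<^sub>R u"
  define z2 where "z2 = a *\<^sub>R u"
  have z1: "norm z1 \<le> t * (norm u + norm v)"
    using norm_triangle_ineq[of "t *\<^sub>R v" "a *\<^sub>R u"] a
      mult_right_mono[OF less_imp_le[OF a(2)] norm_ge_zero, of u]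
    by (simp add: z1_def algebra_simps)
  have "norm z2 = a * norm u" "0 \<le> t * norm v"
    using a by (simp_all add: z2_def)
  then have z2: "norm z2 \<le> t * (norm u + norm v)"
    using mult_right_mono[OF less_imp_le[OF a(2)] norm_ge_zero, of u]
    unfolding distrib_left by linarith
  have K_diff: "K *v z1 - K *v z2 = t *\<^sub>R (K *v v)"
    by (simp add: z1_def z2_def matrix_vector_right_distrib matrix_vector_mult_scaleR)
  have "?r z1 \<bullet> u - ?r z2 \<bullet> u = G (x + z1) \<bullet> u - G (x + z2) \<bullet> u - (K *v z1 - K *v z2) \<bullet> u"
    by (simp add: inner_diff_left)
  also have "\<dots> = \<psi>' a"
    unfolding K_diff by (simp add: \<psi>'_def z1_def z2_def add.assoc)
  finally have "\<psi>' a = ?r z1 \<bullet> u - ?r z2 \<bullet> u" ..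
  then have "\<bar>\<psi>' a\<bar> \<le> norm (?r z1) * norm u + norm (?r z2) * norm u"
    by (smt (verit) Cauchy_Schwarz_ineq2)
  also have "\<dots> \<le> (e * norm z1) * norm u + (e * norm z2) * norm u"
    using z1 z2 assms(5) by (intro add_mono mult_right_mono near) auto
  also have "\<dots> \<le> (e * (t * (norm u + norm v))) * (norm u + norm v)
      + (e * (t * (norm u + norm v))) * (norm u + norm v)"
    using z1 z2 \<open>0 \<le> e\<close> \<open>0 < t\<close> by (intro add_mono mult_mono mult_left_mono) auto
  also have "\<dots> = 2 * e * t * (norm u + norm v)\<^sup>2"
    by (simp add: power2_eq_square)
  finally have bound: "\<bar>\<psi>' a\<bar> \<le> 2 * e * t * (norm u + norm v)\<^sup>2" .
  have "f (x + t *\<^sub>R v + t *\<^sub>R u) - f (x + t *\<^sub>R u) - f (x + t *\<^sub>R v) + f x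
      - t\<^sup>2 * ((K *v v) \<bullet> u) = t * \<psi>' a"
    using mvt by (simp add: \<psi>_def power2_eq_square algebra_simps)
  then have "\<bar>f (x + t *\<^sub>R v + t *\<^sub>R u) - f (x + t *\<^sub>R u) - f (x + t *\<^sub>R v) + f x
      - t\<^sup>2 * ((K *v v) \<bullet> u)\<bar> = t * \<bar>\<psi>' a\<bar>"
    using \<open>0 < t\<close> by (simp add: abs_mult)
  also have "\<dots> \<le> t * (2 * e * t * (norm u + norm v)\<^sup>2)"
    using bound \<open>0 < t\<close> by simp
  finally show ?thesis
    by (simp add: power2_eq_square mult_ac)
qed

lemma eq_0_if_abs_le_epsilon_mult:
  fixes d c :: real
  assumes small: "\<And>e. 0 < e \<Longrightarrow> \<bar>d\<bar> \<le> e * c"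
  shows "d = 0"
proof -
  have "0 < c + 1"
    using small[of 1] by linarith
  have "\<bar>d\<bar> \<le> 0 + e" if "0 < e" for e
proof -
    have "\<bar>d\<bar> \<le> e / (c + 1) * c"
      using \<open>0 < c + 1\<close> that by (intro small) simp
    also have "\<dots> \<le> e"
      using \<open>0 < c + 1\<close> that by (simp add: field_simps)
    finally show ?thesis
      by simp
  qed
  then show ?thesis
    using field_le_epsilon[of "\<bar>d\<bar>" 0] by simp
qed

lemma hessian_asymmetry_le:
  fixes f :: "real^'n::finite \<Rightarrow> real"
  assumes grad: "\<And>y. (f has_derivative (\<lambda>h. G y \<bullet> h)) (at y)"
    and hess: "(G has_derivative (\<lambda>h. K *v h)) (at x)"
    and "0 < e"
  shows "\<bar>(K *v v) \<bullet> u - (K *v u) \<bullet> v\<bar> \<le> e * (4 * (norm u + norm v)\<^sup>2)"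
proof -
  from conjunct2[OF hess[unfolded has_derivative_at_alt], rule_format, OF \<open>0 < e\<close>]
  obtain \<delta> where "0 < \<delta>" and \<delta>: "\<And>y. norm (y - x) < \<delta> \<Longrightarrow>
      norm (G y - G x - K *v (y - x)) \<le> e * norm (y - x)"
    by auto
  have near: "norm (G (x + z) - G x - K *v z) \<le> e * norm z" if "norm z < \<delta>" for z
    using \<delta>[of "x + z"] that by simp
  define S where "S = norm u + norm v"
  have "0 \<le> S"
    by (simp add: S_def)
  define t where "t = \<delta> / (2 * (S + 1))"
  have "0 < t"
    using \<open>0 < \<delta>\<close> \<open>0 \<le> S\<close> by (simp add: t_def add_nonneg_pos)
  have "t * S = \<delta> * (S / (2 * (S + 1)))"
    by (simp add: t_def)
  also have "\<dots> < \<delta> * 1"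
    using \<open>0 < \<delta>\<close> \<open>0 \<le> S\<close> by (intro mult_strict_left_mono) (simp_all add: divide_less_eq_1)
  finally have "t * (norm u + norm v) < \<delta>" "t * (norm v + norm u) < \<delta>"
    by (simp_all add: S_def add.commute)
  \<comment> \<open>The second difference is symmetric in u and v, so it approximates both
    t^2 (K v) . u and t^2 (K u) . v.\<close>
  let ?A = "f (x + t *\<^sub>R v + t *\<^sub>R u) - f (x + t *\<^sub>R u) - f (x + t *\<^sub>R v) + f x"
  have vu: "\<bar>?A - t\<^sup>2 * ((K *v v) \<bullet> u)\<bar> \<le> 2 * e * t\<^sup>2 * (norm u + norm v)\<^sup>2"
    using \<open>0 < e\<close> \<open>0 < t\<close> \<open>t * (norm u + norm v) < \<delta>\<close>
    by (intro second_difference_near_hessian[OF grad near]) auto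
  have uv: "\<bar>?A - t\<^sup>2 * ((K *v u) \<bullet> v)\<bar> \<le> 2 * e * t\<^sup>2 * (norm u + norm v)\<^sup>2"
    using second_difference_near_hessian[OF grad near _ \<open>0 < t\<close> \<open>t * (norm v + norm u) < \<delta>\<close>]
      \<open>0 < e\<close> by (simp add: add_ac)
  have "t\<^sup>2 * \<bar>(K *v v) \<bullet> u - (K *v u) \<bullet> v\<bar>
      = \<bar>(?A - t\<^sup>2 * ((K *v u) \<bullet> v)) - (?A - t\<^sup>2 * ((K *v v) \<bullet> u))\<bar>"
    by (simp add: abs_mult flip: right_diff_distrib)
  also have "\<dots> \<le> 2 * e * t\<^sup>2 * (norm u + norm v)\<^sup>2 + 2 * e * t\<^sup>2 * (norm u + norm v)\<^sup>2"
    using uv vu by (rule order_trans[OF abs_triangle_ineq4 add_mono])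
  also have "\<dots> = t\<^sup>2 * (e * (4 * (norm u + norm v)\<^sup>2))"
    by (simp add: algebra_simps)
  finally show ?thesis
    using \<open>0 < t\<close> by simp
qed

lemma hessian_symmetric:
  fixes f :: "real^'n::finite \<Rightarrow> real"
  assumes grad: "\<And>y. (f has_derivative (\<lambda>h. G y \<bullet> h)) (at y)"
    and hess: "(G has_derivative (\<lambda>h. K *v h)) (at x)"
  shows "transpose K = K"
proof -
  have "(K *v v) \<bullet> u = (K *v u) \<bullet> v" for u v
    using eq_0_if_abs_le_epsilon_mult[OF hessian_asymmetry_le[OF grad hess]] by simp
  from this[of "axis i 1" "axis j 1" for i j] show ?thesis
    by (simp add: transpose_eq_self_iff inner_axis' inner_axis matrix_vector_mul_component)
qed

definition symmetric_tensor3 :: "'n::finite tensor3 \<Rightarrow> bool" where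
  "symmetric_tensor3 T \<longleftrightarrow> (\<forall>i j k. T$i$j$k = T$j$i$k \<and> T$i$j$k = T$i$k$j)"

lemma t3_app1_nth: "t3_app1 T s $ i $ j = T $ i $ j \<bullet> s"
  by (simp add: t3_app1_def inner_vec_def)

lemma symmetric_tensor3_third_derivative:
  fixes f :: "real^'n::finite \<Rightarrow> real"
  assumes grad: "\<And>x. (f has_derivative (\<lambda>h. g x \<bullet> h)) (at x)"
    and hess: "\<And>x. (g has_derivative (\<lambda>h. H x *v h)) (at x)"
    and third: "\<And>x. (H has_derivative (\<lambda>h. t3_app1 (T x) h)) (at x)"
  shows "symmetric_tensor3 (T x)"
proof -
  have swap23: "T x $ i $ j $ k = T x $ i $ k $ j" for i j k
proof -
    have "((\<lambda>y. g y $ i) has_derivative (\<lambda>h. H y $ i \<bullet> h)) (at y)" for y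
      using bounded_linear.has_derivative[OF bounded_linear_vec_nth hess]
      by (simp add: matrix_vector_mul_component)
    moreover have "((\<lambda>y. H y $ i) has_derivative (\<lambda>h. T x $ i *v h)) (at x)"
      using bounded_linear.has_derivative[OF bounded_linear_vec_nth third]
      by (simp add: t3_app1_def matrix_vector_mult_def)
    ultimately have "transpose (T x $ i) = T x $ i"
      by (rule hessian_symmetric)
    then show ?thesis
      by (simp add: transpose_eq_self_iff)
  qed
  have swap12: "T x $ i $ j $ k = T x $ j $ i $ k" for i j k
proof -
    have H_sym: "H y $ j $ i = H y $ i $ j" for y
      using hessian_symmetric[OF grad hess] by (simp add: transpose_eq_self_iff)
    have entry: "((\<lambda>y. H y $ a $ b) has_derivative (\<lambda>h. t3_app1 (T x) h $ a $ b)) (at x)" for a b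
      using bounded_linear.has_derivative[OF bounded_linear_vec_nth
          bounded_linear.has_derivative[OF bounded_linear_vec_nth third]] .
    have "((\<lambda>y. H y $ i $ j) has_derivative (\<lambda>h. t3_app1 (T x) h $ j $ i)) (at x)"
      using entry[of j i] by (simp only: H_sym)
    from has_derivative_unique[OF entry[of i j] this]
    have "(\<lambda>h. t3_app1 (T x) h $ i $ j) = (\<lambda>h. t3_app1 (T x) h $ j $ i)" .
    from fun_cong[OF this, of "axis k 1"] show ?thesis
      by (simp add: t3_app1_nth inner_axis)
  qed
  show ?thesis
    unfolding symmetric_tensor3_def
  proof (intro allI conjI)
    fix i j k
    show "T x $ i $ j $ k = T x $ j $ i $ k" by (rule swap12)
    show "T x $ i $ j $ k = T x $ i $ k $ j" by (rule swap23)
  qed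
qed

lemma symmetric_tensor3_scaleR_sum:
  assumes "\<And>i. i \<in> I \<Longrightarrow> symmetric_tensor3 (T i)"
  shows "symmetric_tensor3 (c *\<^sub>R (\<Sum>i\<in>I. T i))"
  using assms unfolding symmetric_tensor3_def by (simp cong: sum.cong)

lemma transpose_scaleR_sum:
  fixes A :: "'i \<Rightarrow> real^'n::finite^'n"
  assumes "\<And>i. i \<in> I \<Longrightarrow> transpose (A i) = A i"
  shows "transpose (c *\<^sub>R (\<Sum>i\<in>I. A i)) = c *\<^sub>R (\<Sum>i\<in>I. A i)"
proof -
  have "A i $ k $ j = A i $ j $ k" if "i \<in> I" for i j k
    using assms[OF that] by (simp add: transpose_eq_self_iff)
  then show ?thesis
    by (simp add: vec_eq_iff transpose_def cong: sum.cong)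
qed

definition tensor3_form :: "'n::finite tensor3 \<Rightarrow> real^'n \<Rightarrow> real^'n \<Rightarrow> real^'n \<Rightarrow> real" where
  "tensor3_form T h1 h2 h3 = (\<Sum>i\<in>UNIV. \<Sum>j\<in>UNIV. \<Sum>k\<in>UNIV. T$i$j$k * h1$i * h2$j * h3$k)"

lemma linear_tensor3_form: "linear (\<lambda>T. tensor3_form T h1 h2 h3)"
  by (rule linearI) (simp_all add: tensor3_form_def sum.distrib sum_distrib_left algebra_simps)

lemma tensor3_form_scaleR:
  "tensor3_form T (a *\<^sub>R h1) (b *\<^sub>R h2) (c *\<^sub>R h3) = a * b * c * tensor3_form T h1 h2 h3"
  by (simp add: tensor3_form_def sum_distrib_left mult_ac)

lemma bdd_above_tensor3_form:
  fixes T :: "'n::finite tensor3"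
  shows "bdd_above {\<bar>tensor3_form T h1 h2 h3\<bar> | h1 h2 h3. norm h1 = 1 \<and> norm h2 = 1 \<and> norm h3 = 1}"
proof (rule bdd_aboveI, safe)
  fix h1 h2 h3 :: "real^'n"
  assume unit: "norm h1 = 1" "norm h2 = 1" "norm h3 = 1"
  have entry: "\<bar>T$i$j$k * h1$i * h2$j * h3$k\<bar> \<le> \<bar>T$i$j$k\<bar>" for i j k
proof -
    have "\<bar>h1$i\<bar> * \<bar>h2$j\<bar> * \<bar>h3$k\<bar> \<le> 1"
      using component_le_norm_cart[of h1 i] component_le_norm_cart[of h2 j]
        component_le_norm_cart[of h3 k] unit
      by (simp add: mult_le_one)
    from mult_left_le[OF this abs_ge_zero[of "T$i$j$k"]] show ?thesis
      by (simp add: abs_mult mult_ac)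
  qed
  have "\<bar>tensor3_form T h1 h2 h3\<bar> \<le> (\<Sum>i\<in>UNIV. \<Sum>j\<in>UNIV. \<Sum>k\<in>UNIV. \<bar>T$i$j$k * h1$i * h2$j * h3$k\<bar>)"
    unfolding tensor3_form_def
    by (intro order_trans[OF sum_abs] sum_mono) (simp add: order_trans[OF sum_abs] sum_mono)
  also have "\<dots> \<le> (\<Sum>i\<in>UNIV. \<Sum>j\<in>UNIV. \<Sum>k\<in>UNIV. \<bar>T$i$j$k\<bar>)"
    by (intro sum_mono entry)
  finally show "\<bar>tensor3_form T h1 h2 h3\<bar> \<le> (\<Sum>i\<in>UNIV. \<Sum>j\<in>UNIV. \<Sum>k\<in>UNIV. \<bar>T$i$j$k\<bar>)" .
qed

lemma abs_tensor3_form_le_tnorm3_unit: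
  assumes "norm h1 = 1" "norm h2 = 1" "norm h3 = 1"
  shows "\<bar>tensor3_form T h1 h2 h3\<bar> \<le> tnorm3 T"
  unfolding tnorm3_def tensor3_form_def[symmetric]
  using assms by (intro cSup_upper[OF _ bdd_above_tensor3_form]) blast

lemma tnorm3_nonneg: "0 \<le> tnorm3 (T :: 'n::finite tensor3)"
proof -
  have "norm (axis undefined 1 :: real^'n) = 1"
    by (simp add: norm_axis_1)
  from abs_tensor3_form_le_tnorm3_unit[OF this this this, of T] show ?thesis
    by linarith
qed

lemma abs_tensor3_form_le:
  "\<bar>tensor3_form T h1 h2 h3\<bar> \<le> tnorm3 T * norm h1 * norm h2 * norm h3"
proof (cases "h1 = 0 \<or> h2 = 0 \<or> h3 = 0")
  case True
  then show ?thesis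
    using tnorm3_nonneg[of T] by (auto simp: tensor3_form_def)
next
  case False
  then have pos: "0 < norm h1 * norm h2 * norm h3"
    by simp
  have "tensor3_form T (h1 /\<^sub>R norm h1) (h2 /\<^sub>R norm h2) (h3 /\<^sub>R norm h3)
      = tensor3_form T h1 h2 h3 / (norm h1 * norm h2 * norm h3)"
    by (simp add: tensor3_form_scaleR divide_inverse mult_ac)
  moreover have "\<bar>tensor3_form T (h1 /\<^sub>R norm h1) (h2 /\<^sub>R norm h2) (h3 /\<^sub>R norm h3)\<bar> \<le> tnorm3 T"
    using False by (intro abs_tensor3_form_le_tnorm3_unit) auto
  ultimately show ?thesis
    using pos by (simp add: abs_divide pos_divide_le_eq mult_ac)
qed

lemma quadratic_form_t3_app1: "y \<bullet> (t3_app1 T s *v y) = tensor3_form T y y s"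
  by (simp add: t3_app1_def tensor3_form_def inner_vec_def matrix_vector_mult_def
      sum_distrib_left sum_distrib_right mult_ac)

lemma tensor3_form_eq_inner_t3_app2:
  assumes "symmetric_tensor3 T"
  shows "tensor3_form T y y s = s \<bullet> t3_app2 T y"
proof -
  have cyc: "T$i$j$k * y$i * y$j * s$k = T$k$i$j * y$i * y$j * s$k" for i j k
    using assms unfolding symmetric_tensor3_def by metis
  have "tensor3_form T y y s = (\<Sum>i\<in>UNIV. \<Sum>j\<in>UNIV. \<Sum>k\<in>UNIV. T$k$i$j * y$i * y$j * s$k)"
    unfolding tensor3_form_def
    by (rule sum.cong[OF refl], rule sum.cong[OF refl], rule sum.cong[OF refl], rule cyc)
  also have "\<dots> = (\<Sum>i\<in>UNIV. \<Sum>k\<in>UNIV. \<Sum>j\<in>UNIV. T$k$i$j * y$i * y$j * s$k)"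
    by (rule sum.cong[OF refl], rule sum.swap)
  also have "\<dots> = (\<Sum>k\<in>UNIV. \<Sum>i\<in>UNIV. \<Sum>j\<in>UNIV. T$k$i$j * y$i * y$j * s$k)"
    by (rule sum.swap)
  also have "\<dots> = s \<bullet> t3_app2 T y"
    by (simp add: t3_app2_def inner_vec_def sum_distrib_left mult_ac)
  finally show ?thesis .
qed

lemma tnorm3_lipschitz_const_nonneg:
  fixes T :: "real^'n::finite \<Rightarrow> 'n tensor3"
  assumes "\<And>x y. tnorm3 (T x - T y) \<le> L * norm (x - y)"
  shows "0 \<le> L"
proof -
  have "0 \<le> tnorm3 (T 0 - T (axis undefined 1))"
    by (rule tnorm3_nonneg)
  also have "\<dots> \<le> L"
    using assms[of 0 "axis undefined 1"] by (simp add: norm_axis_1)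
  finally show ?thesis .
qed

section \<open>Curvature of the objective at the trial point\<close>

lemma linear_quadratic_form: "linear (\<lambda>M :: real^'n::finite^'n. y \<bullet> (M *v y))"
  by (rule linearI) (simp_all add: matrix_vector_mult_add_rdistrib inner_add_right
      scaleR_matrix_vector_assoc[symmetric])

lemma t3_app1_scaleR: "t3_app1 T (c *\<^sub>R s) = c *\<^sub>R t3_app1 T s"
  by (simp add: t3_app1_def vec_eq_iff sum_distrib_left mult_ac)

lemma quadratic_form_taylor_lower_bound:
  fixes H :: "real^'n::finite \<Rightarrow> real^'n^'n"
  assumes third: "\<And>x. (H has_derivative (\<lambda>h. t3_app1 (T x) h)) (at x)"
    and lip: "\<And>x y. tnorm3 (T x - T y) \<le> L * norm (x - y)"
  shows "y \<bullet> (H x *v y) + tensor3_form (T x) y y s - L / 2 * (norm s)\<^sup>2 * (norm y)\<^sup>2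
         \<le> y \<bullet> (H (x + s) *v y)"
proof -
  define q where "q M = y \<bullet> (M *v y)" for M :: "real^'n^'n"
  define \<phi>' where "\<phi>' t = tensor3_form (T (x + t *\<^sub>R s)) y y s" for t
  define c where "c = L * (norm s)\<^sup>2 * (norm y)\<^sup>2"
  define \<psi> where "\<psi> t = q (H (x + t *\<^sub>R s)) - \<phi>' 0 * t + c / 2 * t\<^sup>2" for t
  define \<psi>' where "\<psi>' t = \<phi>' t - \<phi>' 0 + c * t" for t
  have lin: "linear q"
    unfolding q_def by (rule linear_quadratic_form)
  have "((\<lambda>t. q (H (x + t *\<^sub>R s))) has_real_derivative \<phi>' t) (at t)" for t
proof -
    have "((\<lambda>t. x + t *\<^sub>R s) has_derivative (\<lambda>h. h *\<^sub>R s)) (at t)"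
      by (auto intro!: derivative_eq_intros)
    from has_derivative_compose[OF this third]
    have "((\<lambda>t. H (x + t *\<^sub>R s)) has_derivative (\<lambda>h. t3_app1 (T (x + t *\<^sub>R s)) (h *\<^sub>R s))) (at t)" .
    from bounded_linear.has_derivative[OF lin[unfolded linear_conv_bounded_linear] this]
    show ?thesis
      by (simp add: has_field_derivative_def t3_app1_scaleR linear_scale[OF lin] q_def
          scaleR_matrix_vector_assoc[symmetric] quadratic_form_t3_app1 \<phi>'_def
        mult.commute[of _ "tensor3_form _ y y s"])
  qed
  then have "(\<psi> has_real_derivative \<psi>' t) (at t)" for t
    unfolding \<psi>_def \<psi>'_def by (auto intro!: derivative_eq_intros)
  then obtain z where z: "0 < z" "z < 1" and mvt: "\<psi> 1 - \<psi> 0 = \<psi>' z"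
    using MVT2[of 0 1 \<psi> \<psi>'] by auto
  have "\<bar>\<phi>' z - \<phi>' 0\<bar> = \<bar>tensor3_form (T (x + z *\<^sub>R s) - T x) y y s\<bar>"
    by (simp add: \<phi>'_def linear_diff[OF linear_tensor3_form])
  also have "\<dots> \<le> tnorm3 (T (x + z *\<^sub>R s) - T x) * norm y * norm y * norm s"
    by (rule abs_tensor3_form_le)
  also have "\<dots> \<le> (L * norm (x + z *\<^sub>R s - x)) * norm y * norm y * norm s"
    by (intro mult_right_mono lip) auto
  also have "\<dots> = c * z"
    using z by (simp add: c_def power2_eq_square mult_ac)
  finally have "0 \<le> \<psi>' z"
    unfolding \<psi>'_def by linarith
  with mvt show ?thesis
    by (simp add: \<psi>_def \<phi>'_def q_def c_def quadratic_form_t3_app1[symmetric])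
qed

lemma mean_quadratic_form_taylor_lower_bound:
  fixes H :: "'i \<Rightarrow> real^'n::finite \<Rightarrow> real^'n^'n"
  assumes "finite I" "I \<noteq> {}"
    and third: "\<And>i x. i \<in> I \<Longrightarrow> (H i has_derivative (\<lambda>h. t3_app1 (T i x) h)) (at x)"
    and lip: "\<And>i x y. i \<in> I \<Longrightarrow> tnorm3 (T i x - T i y) \<le> L * norm (x - y)"
  shows "y \<bullet> (((1 / real (card I)) *\<^sub>R (\<Sum>i\<in>I. H i x)) *v y)
           + tensor3_form ((1 / real (card I)) *\<^sub>R (\<Sum>i\<in>I. T i x)) y y s
           - L / 2 * (norm s)\<^sup>2 * (norm y)\<^sup>2
         \<le> y \<bullet> (((1 / real (card I)) *\<^sub>R (\<Sum>i\<in>I. H i (x + s))) *v y)"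
proof -
  have "(\<Sum>i\<in>I. y \<bullet> (H i x *v y) + tensor3_form (T i x) y y s - L / 2 * (norm s)\<^sup>2 * (norm y)\<^sup>2)
      \<le> (\<Sum>i\<in>I. y \<bullet> (H i (x + s) *v y))"
    by (intro sum_mono quadratic_form_taylor_lower_bound third lip)
  then have "(\<Sum>i\<in>I. y \<bullet> (H i x *v y)) + (\<Sum>i\<in>I. tensor3_form (T i x) y y s)
      - real (card I) * (L / 2 * (norm s)\<^sup>2 * (norm y)\<^sup>2) \<le> (\<Sum>i\<in>I. y \<bullet> (H i (x + s) *v y))"
    by (simp add: sum.distrib sum_subtractf)
  then have "(1 / real (card I)) * ((\<Sum>i\<in>I. y \<bullet> (H i x *v y)) + (\<Sum>i\<in>I. tensor3_form (T i x) y y s)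
      - real (card I) * (L / 2 * (norm s)\<^sup>2 * (norm y)\<^sup>2))
      \<le> (1 / real (card I)) * (\<Sum>i\<in>I. y \<bullet> (H i (x + s) *v y))"
    by (rule mult_left_mono) simp
  moreover have "0 < real (card I)"
    using assms(1,2) by (simp add: card_gt_0_iff)
  ultimately show ?thesis
    by (simp add: linear_scale[OF linear_quadratic_form] linear_sum[OF linear_quadratic_form]
        linear_scale[OF linear_tensor3_form] linear_sum[OF linear_tensor3_form] field_simps)
qed

lemma quadratic_form_model_hess:
  "y \<bullet> (model_hess B T \<sigma> s *v y)
     = y \<bullet> (B *v y) + tensor3_form T y y s + \<sigma> * ((norm s)\<^sup>2 * (norm y)\<^sup>2 + 2 * (s \<bullet> y)\<^sup>2)"
proof -
  have "outer s s *v y = (s \<bullet> y) *\<^sub>R s"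
    by (simp add: outer_def matrix_vector_mult_def vec_eq_iff inner_vec_def sum_distrib_left mult_ac)
  then have "y \<bullet> (outer s s *v y) = (s \<bullet> y)\<^sup>2"
    by (simp add: inner_commute[of s y] power2_eq_square)
  then show ?thesis
    unfolding model_hess_def
    by (simp add: linear_add[OF linear_quadratic_form] linear_scale[OF linear_quadratic_form]
        quadratic_form_t3_app1 dot_square_norm)
qed

lemma transpose_model_hess:
  assumes "transpose B = B" "symmetric_tensor3 T"
  shows "transpose (model_hess B T \<sigma> s) = model_hess B T \<sigma> s"
proof -
  have "B $ j $ i = B $ i $ j" "T $ j $ i $ k = T $ i $ j $ k" for i j k
    using assms unfolding symmetric_tensor3_def transpose_eq_self_iff by metis+
  then show ?thesis
    by (simp add: vec_eq_iff transpose_def model_hess_def t3_app1_def outer_def mat_def mult.commute)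
qed

lemma chi2_hessian_at_step_le:
  fixes B Hx Hxs :: "real^'n::finite^'n" and Tk Tx :: "'n tensor3"
  assumes sym: "transpose B = B" "transpose Hxs = Hxs" "symmetric_tensor3 Tk" "symmetric_tensor3 Tx"
    and taylor: "\<And>y. norm y = 1 \<Longrightarrow>
      y \<bullet> (Hx *v y) + tensor3_form Tx y y s - L / 2 * (norm s)\<^sup>2 \<le> y \<bullet> (Hxs *v y)"
    and sample_B: "\<And>y. norm ((B - Hx) *v y) \<le> 1/4 * \<epsilon> powr (2/3) * norm y"
    and sample_T: "\<And>y. norm (t3_app2 Tk y - t3_app2 Tx y) \<le> 1/2 * \<epsilon> powr (1/3) * (norm y)\<^sup>2"
    and model: "chi_m2 B Tk \<sigma> s \<le> \<theta> * (norm s)\<^sup>2"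
    and nonneg: "0 \<le> \<sigma>" "0 \<le> L" "0 \<le> \<theta>"
  shows "chi2 Hxs \<le> (3 * \<sigma> + L / 2 + \<theta> + 1/4) * (norm s)\<^sup>2 + \<epsilon> powr (2/3) / 2"
proof (rule chi2_le_of_quadratic_form_ge[OF sym(2)])
  define r where "r = \<epsilon> powr (1/3)"
  have r2: "\<epsilon> powr (2/3) = r\<^sup>2"
    by (simp add: r_def power2_eq_square flip: powr_add)
  show "0 \<le> (3 * \<sigma> + L / 2 + \<theta> + 1/4) * (norm s)\<^sup>2 + \<epsilon> powr (2/3) / 2"
    using nonneg by simp
  fix y :: "real^'n"
  assume y: "norm y = 1"
  have "- \<theta> * (norm s)\<^sup>2 \<le> y \<bullet> (model_hess B Tk \<sigma> s *v y)"
    using neg_chi2_le_quadratic_form[OF transpose_model_hess[OF sym(1,3), of \<sigma> s] y] model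
    unfolding chi_m2_def by linarith
  moreover have "\<sigma> * ((norm s)\<^sup>2 + 2 * (s \<bullet> y)\<^sup>2) \<le> \<sigma> * (3 * (norm s)\<^sup>2)"
proof -
    have "(s \<bullet> y)\<^sup>2 \<le> (norm s)\<^sup>2"
      using Cauchy_Schwarz_ineq[of s y] y by (simp add: power2_norm_eq_inner[symmetric])
    then show ?thesis
      using nonneg(1) by (intro mult_left_mono) auto
  qed
  ultimately have model_part:
    "- \<theta> * (norm s)\<^sup>2 - \<sigma> * (3 * (norm s)\<^sup>2) \<le> y \<bullet> (B *v y) + tensor3_form Tk y y s"
    using y by (simp add: quadratic_form_model_hess)
  have "\<bar>y \<bullet> (B *v y) - y \<bullet> (Hx *v y)\<bar> \<le> norm y * norm ((B - Hx) *v y)"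
    by (metis Cauchy_Schwarz_ineq2 inner_diff_right matrix_vector_mult_diff_rdistrib)
  also have "\<dots> \<le> r\<^sup>2 / 4"
    using sample_B[of y] y by (simp add: r2)
  finally have B_part: "y \<bullet> (B *v y) - r\<^sup>2 / 4 \<le> y \<bullet> (Hx *v y)"
    by linarith
  have "tensor3_form Tk y y s - tensor3_form Tx y y s = s \<bullet> (t3_app2 Tk y - t3_app2 Tx y)"
    by (simp add: tensor3_form_eq_inner_t3_app2 sym inner_diff_right)
  also have "\<dots> \<le> norm s * norm (t3_app2 Tk y - t3_app2 Tx y)"
    by (rule order_trans[OF abs_ge_self Cauchy_Schwarz_ineq2])
  also have "\<dots> \<le> norm s * (r / 2)"
    using sample_T[of y] y by (intro mult_left_mono) (auto simp: r_def)
  also have "\<dots> \<le> r\<^sup>2 / 4 + (norm s)\<^sup>2 / 4" \<comment> \<open>AM-GM\<close>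
    using sum_squares_ge_zero[of "r - norm s" 0] by (simp add: power2_eq_square algebra_simps)
  finally have T_part: "tensor3_form Tk y y s - r\<^sup>2 / 4 - (norm s)\<^sup>2 / 4 \<le> tensor3_form Tx y y s"
    by linarith
  have "(3 * \<sigma> + L / 2 + \<theta> + 1/4) * (norm s)\<^sup>2
      = \<sigma> * (3 * (norm s)\<^sup>2) + L / 2 * (norm s)\<^sup>2 + \<theta> * (norm s)\<^sup>2 + (norm s)\<^sup>2 / 4"
    by (simp add: algebra_simps)
  then show "- ((3 * \<sigma> + L / 2 + \<theta> + 1/4) * (norm s)\<^sup>2 + \<epsilon> powr (2/3) / 2) \<le> y \<bullet> (Hxs *v y)"
    using taylor[OF y] model_part B_part T_part r2 by linarith
qed

lemma powr_neg_half_mult_powr_half_le: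
  fixes \<kappa> c r :: real
  assumes "0 < \<kappa>" "0 \<le> r" "0 \<le> c" "c \<le> \<kappa> * r\<^sup>2"
  shows "\<kappa> powr (-1/2) * c powr (1/2) \<le> r"
proof -
  have "c powr (1/2) = sqrt c"
    using assms(3) by (simp add: powr_half_sqrt)
  also have "\<dots> \<le> sqrt (\<kappa> * r\<^sup>2)"
    using assms(4) by (rule real_sqrt_le_mono)
  also have "\<dots> = sqrt \<kappa> * r"
    using assms(2) by (simp add: real_sqrt_mult)
  finally have "c powr (1/2) \<le> sqrt \<kappa> * r" .
  moreover have "\<kappa> powr (-1/2) = 1 / sqrt \<kappa>"
    using assms(1) by (simp add: powr_minus_divide powr_half_sqrt)
  ultimately show ?thesis
    using assms(1) by (simp add: divide_le_eq mult.commute)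
qed

theorem lemma3:
  fixes n :: nat
    and fs :: "nat \<Rightarrow> real^'d::finite \<Rightarrow> real"
    and gs :: "nat \<Rightarrow> real^'d \<Rightarrow> real^'d"
    and Hs :: "nat \<Rightarrow> real^'d \<Rightarrow> real^'d^'d"
    and Ts :: "nat \<Rightarrow> real^'d \<Rightarrow> 'd tensor3"
    and Lf Lg Lb Lt :: real
    and Sg Sb St :: "nat set"
    and xk sk :: "real^'d"
    and \<sigma>k \<epsilon> \<theta> \<zeta> :: real
  assumes n_pos: "n \<ge> 1"
    and d1: "\<And>i x. i \<in> {1..n} \<Longrightarrow> (fs i has_derivative (\<lambda>h. gs i x \<bullet> h)) (at x)"
    and d2: "\<And>i x. i \<in> {1..n} \<Longrightarrow> (gs i has_derivative (\<lambda>h. Hs i x *v h)) (at x)"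
    and d3: "\<And>i x. i \<in> {1..n} \<Longrightarrow> (Hs i has_derivative (\<lambda>h. t3_app1 (Ts i x) h)) (at x)"
    and lip_f: "\<And>i x y. i \<in> {1..n} \<Longrightarrow> \<bar>fs i x - fs i y\<bar> \<le> Lf * norm (x - y)"
    and lip_g: "\<And>i x y. i \<in> {1..n} \<Longrightarrow> norm (gs i x - gs i y) \<le> Lg * norm (x - y)"
    and lip_b: "\<And>i x y. i \<in> {1..n} \<Longrightarrow> tnorm2 (Hs i x - Hs i y) \<le> Lb * norm (x - y)"
    and lip_t: "\<And>i x y. i \<in> {1..n} \<Longrightarrow> tnorm3 (Ts i x - Ts i y) \<le> Lt * norm (x - y)"
    and Sg: "Sg \<subseteq> {1..n}" and Sb: "Sb \<subseteq> {1..n}" and St: "St \<subseteq> {1..n}"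
    and \<sigma>_pos: "\<sigma>k > 0" and \<epsilon>_pos: "\<epsilon> > 0" and \<theta>_pos: "\<theta> > 0" and \<zeta>_pos: "\<zeta> > 0"
    and samp_g: "norm ((1 / real (card Sg)) *\<^sub>R (\<Sum>i\<in>Sg. gs i xk)
                   - (1 / real n) *\<^sub>R (\<Sum>i=1..n. gs i xk)) \<le> (1/4) * \<epsilon>"
    and samp_b: "\<And>s. norm (((1 / real (card Sb)) *\<^sub>R (\<Sum>i\<in>Sb. Hs i xk)
                   - (1 / real n) *\<^sub>R (\<Sum>i=1..n. Hs i xk)) *v s)
                   \<le> (1/4) * \<epsilon> powr (2/3) * norm s"
    and samp_t: "\<And>s. norm (t3_app2 ((1 / real (card St)) *\<^sub>R (\<Sum>i\<in>St. Ts i xk)) s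
                   - t3_app2 ((1 / real n) *\<^sub>R (\<Sum>i=1..n. Ts i xk)) s)
                   \<le> (1/2) * \<epsilon> powr (1/3) * norm s ^ 2"
    and dec: "model ((1 / real n) * (\<Sum>i=1..n. fs i xk))
                    ((1 / real (card Sg)) *\<^sub>R (\<Sum>i\<in>Sg. gs i xk))
                    ((1 / real (card Sb)) *\<^sub>R (\<Sum>i\<in>Sb. Hs i xk))
                    ((1 / real (card St)) *\<^sub>R (\<Sum>i\<in>St. Ts i xk)) \<sigma>k sk
              < model ((1 / real n) * (\<Sum>i=1..n. fs i xk))
                    ((1 / real (card Sg)) *\<^sub>R (\<Sum>i\<in>Sg. gs i xk))
                    ((1 / real (card Sb)) *\<^sub>R (\<Sum>i\<in>Sb. Hs i xk))
                    ((1 / real (card St)) *\<^sub>R (\<Sum>i\<in>St. Ts i xk)) \<sigma>k 0"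
    and am1: "chi_m1 ((1 / real (card Sg)) *\<^sub>R (\<Sum>i\<in>Sg. gs i xk))
                     ((1 / real (card Sb)) *\<^sub>R (\<Sum>i\<in>Sb. Hs i xk))
                     ((1 / real (card St)) *\<^sub>R (\<Sum>i\<in>St. Ts i xk)) \<sigma>k sk
              \<le> \<theta> * norm sk ^ 3"
    and am2: "chi_m2 ((1 / real (card Sb)) *\<^sub>R (\<Sum>i\<in>Sb. Hs i xk))
                     ((1 / real (card St)) *\<^sub>R (\<Sum>i\<in>St. Ts i xk)) \<sigma>k sk
              \<le> \<theta> * norm sk ^ 2"
    and am3: "chi_m3 ((1 / real (card Sb)) *\<^sub>R (\<Sum>i\<in>Sb. Hs i xk))
                     ((1 / real (card St)) *\<^sub>R (\<Sum>i\<in>St. Ts i xk)) \<sigma>k \<zeta> sk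
              \<le> \<theta> * norm sk"
  shows "norm sk \<ge>
           (let \<epsilon>2 = \<epsilon> powr (2/3);
                \<kappa> = 3 * \<sigma>k + Lt / 2 + \<theta> + 1/4;
                c = chi2 ((1 / real n) *\<^sub>R (\<Sum>i=1..n. Hs i (xk + sk)))
            in if c < \<epsilon>2 / 2 then 0
               else \<kappa> powr (-1/2) * (c - \<epsilon>2 / 2) powr (1/2))"
proof -
  let ?H = "\<lambda>z. (1 / real n) *\<^sub>R (\<Sum>i=1..n. Hs i z)"
  let ?T = "(1 / real n) *\<^sub>R (\<Sum>i=1..n. Ts i xk)"
  let ?B = "(1 / real (card Sb)) *\<^sub>R (\<Sum>i\<in>Sb. Hs i xk)"
  let ?Tk = "(1 / real (card St)) *\<^sub>R (\<Sum>i\<in>St. Ts i xk)"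
  let ?\<kappa> = "3 * \<sigma>k + Lt / 2 + \<theta> + 1/4"
  have "transpose (Hs i z) = Hs i z" "symmetric_tensor3 (Ts i z)" if "i \<in> {1..n}" for i z
    using hessian_symmetric[OF d1[OF that] d2[OF that]]
      symmetric_tensor3_third_derivative[OF d1[OF that] d2[OF that] d3[OF that]] by auto
  then have sym: "transpose ?B = ?B" "transpose (?H (xk + sk)) = ?H (xk + sk)"
      "symmetric_tensor3 ?Tk" "symmetric_tensor3 ?T"
    using Sb St by (auto intro!: transpose_scaleR_sum symmetric_tensor3_scaleR_sum)
  have taylor: "y \<bullet> (?H xk *v y) + tensor3_form ?T y y sk - Lt / 2 * (norm sk)\<^sup>2
      \<le> y \<bullet> (?H (xk + sk) *v y)" if "norm y = 1" for y
    using mean_quadratic_form_taylor_lower_bound[where I = "{1..n}" and H = Hs and T = Ts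
        and L = Lt and x = xk and y = y and s = sk] d3 lip_t n_pos that
    by simp
  have "0 \<le> Lt"
    using n_pos by (intro tnorm3_lipschitz_const_nonneg[of "Ts 1"] lip_t) simp
  then have "chi2 (?H (xk + sk)) \<le> ?\<kappa> * (norm sk)\<^sup>2 + \<epsilon> powr (2/3) / 2"
    using \<sigma>_pos \<theta>_pos
    by (intro chi2_hessian_at_step_le[OF sym taylor samp_b samp_t am2]) simp_all
  moreover have "0 < ?\<kappa>"
    using \<sigma>_pos \<theta>_pos \<open>0 \<le> Lt\<close> by simp
  ultimately show ?thesis
    unfolding Let_def
    using powr_neg_half_mult_powr_half_le[of ?\<kappa> "norm sk" "chi2 (?H (xk + sk)) - \<epsilon> powr (2/3) / 2"]
    by auto
qed

end
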